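(* Let $a,c,d\in\mathbb{Q}$ with $a,c,d\neq 0$, let $f(t)=t^4+ct+d$, and for $t\in\mathbb{Q}$ with $f(t)\ne0$ let $E^{f(t)}$ be the elliptic curve $f(t)y^2=x^3+ax$ over $\mathbb{Q}$. Then infinitely many fibres $E^{f(t)}$, $t\in\mathbb{Q}$, have positive rank. More precisely, there is a set $W\subset\mathbb{Q}$, which is dense in the half-interval $(-d/c,\infty)$ if $ac>0$, respectively dense in $(-\infty,-d/c)$ if $ac<0$, such that $E^{f(t)}$ has positive Mordell–Weil rank over $\mathbb{Q}$ for all $t\in W$. *)

theory Defs
  imports Complex_Main
begin

text \<open>Points of a curve  k y^2 = x^3 + A x + B  over a field (projective closure:
  affine points plus the point at infinity, which is the neutral element).\<close>

datatype 'a ecpt = Infty | Pt 'a 'a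

definition on_curve :: "'a::field \<Rightarrow> 'a \<Rightarrow> 'a \<Rightarrow> 'a ecpt \<Rightarrow> bool" where
  "on_curve k A B P = (case P of Infty \<Rightarrow> True
      | Pt x y \<Rightarrow> k * y^2 = x^3 + A * x + B)"

fun ec_add :: "'a::field \<Rightarrow> 'a \<Rightarrow> 'a \<Rightarrow> 'a ecpt \<Rightarrow> 'a ecpt \<Rightarrow> 'a ecpt" where
  "ec_add k A B Infty Q = Q"
| "ec_add k A B P Infty = P"
| "ec_add k A B (Pt x1 y1) (Pt x2 y2) =
     (if x1 = x2 then
        (if y1 = - y2 then Infty
         else (let l = (3 * x1^2 + A) / (2 * k * y1);
                   x3 = k * l^2 - 2 * x1
               in Pt x3 (l * (x1 - x3) - y1)))
      else (let l = (y2 - y1) / (x2 - x1);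
                x3 = k * l^2 - x1 - x2
            in Pt x3 (l * (x1 - x3) - y1)))"

fun ec_mult :: "'a::field \<Rightarrow> 'a \<Rightarrow> 'a \<Rightarrow> nat \<Rightarrow> 'a ecpt \<Rightarrow> 'a ecpt" where
  "ec_mult k A B 0 P = Infty"
| "ec_mult k A B (Suc n) P = ec_add k A B P (ec_mult k A B n P)"

text \<open>The curve  k y^2 = x^3 + A x + B  over \<open>\<rat>\<close> has positive Mordell-Weil rank
  iff its (finitely generated) group of rational points contains a point of
  infinite order.\<close>

definition positive_rank :: "rat \<Rightarrow> rat \<Rightarrow> rat \<Rightarrow> bool" where
  "positive_rank k A B =
     (\<exists>P. on_curve k A B P \<and> (\<forall>n::nat. n > 0 \<longrightarrow> ec_mult k A B n P \<noteq> Infty))"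

end

theory Submission
  imports Defs "HOL-Computational_Algebra.Computational_Algebra"
begin

text \<open>
  For \<open>t = (a/r\<^sup>4 - d)/c\<close> one has \<open>f t = t\<^sup>4 + a/r\<^sup>4\<close>, so the fibre contains the point
  \<open>(x, y) = ((t r)\<^sup>2, t r\<^sup>3)\<close>. If \<open>v\<^sub>2(r)\<close> is large, then \<open>v\<^sub>2(t r) = v\<^sub>2(a) - 3 v\<^sub>2(r) - v\<^sub>2(c)\<close>,
  hence \<open>2 v\<^sub>2(x) < v\<^sub>2(a)\<close>. The twist \<open>(x, y) \<mapsto> (k x, k\<^sup>2 y)\<close> carries the point to
  \<open>Y\<^sup>2 = X\<^sup>3 + A X\<close> and preserves this inequality, which there forces infinite order:
  the origin together with the points whose \<open>x\<close>-coordinate has valuation at most \<open>v\<^sub>2(X\<^sub>0)\<close>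
  is stable under adding \<open>P\<^sub>0 = (X\<^sub>0, Y\<^sub>0)\<close>, because adding two such points does not raise the
  valuation of \<open>x\<close> and doubling lowers it by 2. If \<open>N P\<^sub>0 = 0\<close> with \<open>N\<close> minimal, then
  either \<open>N = 2 j\<close> and \<open>j P\<^sub>0\<close> has order two, impossible as \<open>y \<noteq> 0\<close> on these points, or
  \<open>N = 2 j + 1\<close> and \<open>P\<^sub>0 = 2 (-j P\<^sub>0)\<close> would have \<open>x\<close>-valuation at most \<open>v\<^sub>2(X\<^sub>0) - 2\<close>.
  Finally, rationals of large 2-adic valuation are dense in \<open>\<real>\<close>, so these parameters \<open>t\<close>
  are dense on the side of \<open>-d/c\<close> where \<open>a/(c r\<^sup>4)\<close> has the right sign.
\<close>

section \<open>The \<open>p\<close>-adic valuation on \<open>\<rat>\<close>\<close>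

definition rat_val :: "int \<Rightarrow> rat \<Rightarrow> int" where
  "rat_val p r = (case quotient_of r of (n, d) \<Rightarrow> int (multiplicity p n) - int (multiplicity p d))"

text \<open>\<open>val_ge p x n\<close> means \<open>v\<^sub>p(x) \<ge> n\<close> with \<open>v\<^sub>p(0) = \<infinity>\<close>; the value \<open>rat_val p 0 = 0\<close> is junk.\<close>

definition val_ge :: "int \<Rightarrow> rat \<Rightarrow> int \<Rightarrow> bool" where
  "val_ge p x n \<longleftrightarrow> x = 0 \<or> n \<le> rat_val p x"

lemma rat_val_zero [simp]: "rat_val p 0 = 0"
  by (simp add: rat_val_def)

lemma rat_val_of_int_divide:
  assumes p: "prime p" and "n \<noteq> 0" "d \<noteq> 0"
  shows "rat_val p (of_int n / of_int d) = int (multiplicity p n) - int (multiplicity p d)"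
proof -
  obtain n' d' where q: "quotient_of (of_int n / of_int d) = (n', d')" by fastforce
  have "d' > 0" using quotient_of_denom_pos[OF q] .
  moreover have "(of_int n / of_int d :: rat) = of_int n' / of_int d'" using quotient_of_div[OF q] .
  ultimately have e: "n * d' = n' * d"
    using assms by (simp add: field_simps flip: of_int_mult of_int_eq_iff)
  have "n' \<noteq> 0" using e assms \<open>d' > 0\<close> by auto
  then have "multiplicity p (n * d') = multiplicity p (n' * d)" using e by simp
  then have "multiplicity p n + multiplicity p d' = multiplicity p n' + multiplicity p d"
    using \<open>n' \<noteq> 0\<close> \<open>d' > 0\<close> assms(2,3)
    by (simp add: prime_elem_multiplicity_mult_distrib[OF prime_imp_prime_elem[OF p]])
  then show ?thesis unfolding rat_val_def q by simp
qed

lemma nonzero_rat_as_int_fraction: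
  assumes "(x::rat) \<noteq> 0"
  obtains n d where "n \<noteq> 0" "d \<noteq> 0" "x = of_int n / of_int d"
proof -
  obtain n d where q: "quotient_of x = (n, d)" by fastforce
  then show thesis
    using quotient_of_div[OF q] quotient_of_denom_pos[OF q] that[of n d] assms by auto
qed

lemma rat_val_mult:
  assumes p: "prime p" and "x \<noteq> 0" "y \<noteq> 0"
  shows "rat_val p (x * y) = rat_val p x + rat_val p y"
proof -
  obtain n1 d1 where 1: "n1 \<noteq> 0" "d1 \<noteq> 0" "x = of_int n1 / of_int d1"
    by (rule nonzero_rat_as_int_fraction[OF assms(2)])
  obtain n2 d2 where 2: "n2 \<noteq> 0" "d2 \<noteq> 0" "y = of_int n2 / of_int d2"
    by (rule nonzero_rat_as_int_fraction[OF assms(3)])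
  have "x * y = of_int (n1 * n2) / of_int (d1 * d2)" using 1 2 by simp
  then have "rat_val p (x * y) = int (multiplicity p (n1 * n2)) - int (multiplicity p (d1 * d2))"
    using 1 2 by (simp only:) (rule rat_val_of_int_divide[OF p]; simp)
  then show ?thesis using 1 2
    by (simp add: rat_val_of_int_divide[OF p]
        prime_elem_multiplicity_mult_distrib[OF prime_imp_prime_elem[OF p]])
qed

lemma rat_val_one [simp]: "rat_val p 1 = 0"
  by (simp add: rat_val_def)

lemma rat_val_inverse:
  assumes "prime p" shows "rat_val p (inverse x) = - rat_val p x"
proof (cases "x = 0")
  case False
  then have "rat_val p (x * inverse x) = rat_val p x + rat_val p (inverse x)"
    using assms by (intro rat_val_mult) auto
  then show ?thesis using False by simp
qed simp

lemma rat_val_divide: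
  assumes "prime p" "x \<noteq> 0" "y \<noteq> 0"
  shows "rat_val p (x / y) = rat_val p x - rat_val p y"
  using assms by (simp add: divide_inverse rat_val_mult rat_val_inverse)

lemma rat_val_uminus [simp]: "rat_val p (- x) = rat_val p x"
proof -
  obtain n d where "quotient_of x = (n, d)" by fastforce
  then have "quotient_of (- x) = (- n, d)" by (simp add: rat_uminus_code)
  moreover have "multiplicity p (- n) = multiplicity p n"
    using multiplicity_times_unit_right[of "-1" p n] by simp
  ultimately show ?thesis using \<open>quotient_of x = (n, d)\<close> by (simp add: rat_val_def)
qed

lemma rat_val_power:
  assumes "prime p" shows "rat_val p (x ^ n) = int n * rat_val p x"
proof (cases "x = 0")
  case True then show ?thesis by (cases n) auto
next
  case False then show ?thesis
    using assms by (induction n) (auto simp: rat_val_mult algebra_simps)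
qed

lemma rat_val_self:
  assumes "prime p" shows "rat_val p (of_int p) = 1"
  using rat_val_of_int_divide[of p p 1] assms
    by (simp add: multiplicity_prime[OF prime_imp_prime_elem])

lemma val_ge_zero [simp]: "val_ge p 0 n"
  by (simp add: val_ge_def)

lemma val_ge_rat_val: "val_ge p x (rat_val p x)"
  by (simp add: val_ge_def)

lemma val_ge_mono: "val_ge p x n \<Longrightarrow> m \<le> n \<Longrightarrow> val_ge p x m"
  by (auto simp: val_ge_def)

lemma val_ge_uminus [simp]: "val_ge p (- x) n \<longleftrightarrow> val_ge p x n"
  by (auto simp: val_ge_def)

lemma val_ge_mult:
  "prime p \<Longrightarrow> val_ge p x m \<Longrightarrow> val_ge p y n \<Longrightarrow> val_ge p (x * y) (m + n)"
  by (cases "x = 0 \<or> y = 0") (auto simp: val_ge_def rat_val_mult)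

lemma val_ge_add:
  assumes p: "prime p" and x: "val_ge p x m" and y: "val_ge p y m"
  shows "val_ge p (x + y) m"
proof (cases "x = 0 \<or> y = 0 \<or> x + y = 0")
  case False
  obtain n1 d1 where 1: "n1 \<noteq> 0" "d1 \<noteq> 0" "x = of_int n1 / of_int d1"
    using False by (auto elim: nonzero_rat_as_int_fraction)
  obtain n2 d2 where 2: "n2 \<noteq> 0" "d2 \<noteq> 0" "y = of_int n2 / of_int d2"
    using False by (auto elim: nonzero_rat_as_int_fraction)
  define n where "n = n1 * d2 + n2 * d1"
  have xy: "x + y = of_int n / of_int (d1 * d2)" using 1 2 by (simp add: n_def field_simps)
  have "n \<noteq> 0" using xy False by auto
  define K where "K = m + int (multiplicity p d1) + int (multiplicity p d2)"
  have "K \<le> int (multiplicity p n)"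
  proof (cases "K \<le> 0")
    case False
    have "m \<le> int (multiplicity p n1) - int (multiplicity p d1)"
         "m \<le> int (multiplicity p n2) - int (multiplicity p d2)"
      using x y 1 2 p by (auto simp: val_ge_def rat_val_of_int_divide)
    then have "p ^ nat K dvd n1 * d2" "p ^ nat K dvd n2 * d1"
      using 1 2 p
      by (auto intro!: multiplicity_dvd'
          simp: prime_elem_multiplicity_mult_distrib[OF prime_imp_prime_elem[OF p]] K_def)
    then have "p ^ nat K dvd n" by (simp add: n_def)
    then have "nat K \<le> multiplicity p n"
      using \<open>n \<noteq> 0\<close> p by (intro multiplicity_geI) (auto simp: not_prime_unit)
    then show ?thesis by linarith
  qed simp
  moreover have "rat_val p (x + y) = int (multiplicity p n) - int (multiplicity p (d1 * d2))"
    using xy \<open>n \<noteq> 0\<close> 1 2 by (simp only:) (rule rat_val_of_int_divide[OF p]; simp)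
  ultimately show ?thesis
    by (simp add: val_ge_def prime_elem_multiplicity_mult_distrib[OF prime_imp_prime_elem[OF p]]
        1 2 K_def)
qed (use x y in \<open>auto simp: val_ge_def\<close>)

lemma rat_val_add_eq:
  assumes p: "prime p" and x: "x \<noteq> 0" and y: "val_ge p y (rat_val p x + 1)"
  shows "x + y \<noteq> 0" "rat_val p (x + y) = rat_val p x"
proof -
  show ne: "x + y \<noteq> 0"
    using x y by (auto simp: val_ge_def simp flip: eq_neg_iff_add_eq_0)
  have "val_ge p (x + y) (rat_val p x)"
    using val_ge_add[OF p val_ge_rat_val val_ge_mono[OF y]] by simp
  moreover have "\<not> val_ge p (x + y) (rat_val p x + 1)"
  proof
    assume "val_ge p (x + y) (rat_val p x + 1)"
    then have "val_ge p ((x + y) + - y) (rat_val p x + 1)"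
      using val_ge_add[OF p] y by (metis val_ge_uminus)
    then show False using x by (simp add: val_ge_def)
  qed
  ultimately show "rat_val p (x + y) = rat_val p x" using ne by (auto simp: val_ge_def)
qed

lemma rat_val_one_plus:
  assumes "prime p" "val_ge p z 1"
  shows "1 + z \<noteq> 0" "rat_val p (1 + z) = 0"
  using rat_val_add_eq[of p 1 z] assms by simp_all

section \<open>The group law on \<open>y\<^sup>2 = x\<^sup>3 + A x + B\<close>\<close>

fun ec_neg :: "'a::ring ecpt \<Rightarrow> 'a ecpt" where
  "ec_neg Infty = Infty"
| "ec_neg (Pt x y) = Pt x (- y)"

lemma on_curve_Infty [simp]: "on_curve k A B Infty"
  by (simp add: on_curve_def)

lemma on_curve_Pt: "on_curve k A B (Pt x y) \<longleftrightarrow> k * y^2 = x^3 + A * x + B"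
  by (simp add: on_curve_def)

lemma ec_add_Pt_Pt:
  "ec_add 1 A B (Pt x1 y1) (Pt x2 y2) =
     (if x1 = x2 then
        (if y1 = - y2 then Infty
         else (let l = (3 * x1^2 + A) / (2 * y1); x3 = l^2 - 2 * x1 in Pt x3 (l * (x1 - x3) - y1)))
      else (let l = (y2 - y1) / (x2 - x1); x3 = l^2 - x1 - x2 in Pt x3 (l * (x1 - x3) - y1)))"
  for x1 :: "'a::field"
  by simp

lemma on_curve_ec_neg: "on_curve k A B P \<Longrightarrow> on_curve k A B (ec_neg P)"
  by (cases P) (auto simp: on_curve_def)

lemma on_curve_ec_add:
  fixes A B :: "'a::field_char_0"
  assumes "on_curve 1 A B P" "on_curve 1 A B Q"
  shows "on_curve 1 A B (ec_add 1 A B P Q)"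
proof (cases P; cases Q)
  fix x1 y1 x2 y2 assume P: "P = Pt x1 y1" and Q: "Q = Pt x2 y2"
  have c1: "y1^2 = x1^3 + A * x1 + B" and c2: "y2^2 = x2^3 + A * x2 + B"
    using assms P Q by (auto simp: on_curve_def)
  show ?thesis
  proof (cases "x1 = x2")
    case True
    show ?thesis
    proof (cases "y1 = - y2")
      case False
      then have "y1 \<noteq> 0" using c1 c2 True by (auto simp: power2_eq_iff)
      define l where "l = (3 * x1^2 + A) / (2 * y1)"
      have "l * (2 * y1) = 3 * x1^2 + A" using \<open>y1 \<noteq> 0\<close> by (simp add: l_def)
      then have "(l * (x1 - (l^2 - 2 * x1)) - y1)^2 = (l^2 - 2 * x1)^3 + A * (l^2 - 2 * x1) + B"
        using c1 by algebra
      then show ?thesis using P Q True False by (simp add: on_curve_def Let_def l_def)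
    qed (use P Q True in \<open>simp add: on_curve_def\<close>)
  next
    case False
    define l where "l = (y2 - y1) / (x2 - x1)"
    have "l * (x2 - x1) = y2 - y1" using False by (simp add: l_def)
    then have "(l * (x1 - (l^2 - x1 - x2)) - y1)^2 = (l^2 - x1 - x2)^3 + A * (l^2 - x1 - x2) + B"
      using c1 c2 False by algebra
    then show ?thesis using P Q False by (simp add: on_curve_def Let_def l_def)
  qed
qed (use assms in auto)

lemma ec_add_comm:
  fixes A B :: "'a::field"
  assumes "on_curve 1 A B P" "on_curve 1 A B Q"
  shows "ec_add 1 A B P Q = ec_add 1 A B Q P"
proof (cases P; cases Q)
  fix x1 y1 x2 y2 assume P: "P = Pt x1 y1" and Q: "Q = Pt x2 y2"
  have c1: "y1^2 = x1^3 + A * x1 + B" and c2: "y2^2 = x2^3 + A * x2 + B"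
    using assms P Q by (auto simp: on_curve_def)
  show ?thesis
  proof (cases "x1 = x2")
    case True
    then have "y2^2 = y1^2" using c1 c2 by simp
    then have "y2 = y1 \<or> y2 = - y1" by (simp add: power2_eq_iff)
    then show ?thesis using P Q True by auto
  next
    case False
    define l where "l = (y2 - y1) / (x2 - x1)"
    have "l * (x2 - x1) = y2 - y1" using False by (simp add: l_def)
    then have "l * (x1 - (l^2 - x1 - x2)) - y1 = l * (x2 - (l^2 - x2 - x1)) - y2" by algebra
    moreover have "(y1 - y2) / (x1 - x2) = l" using False by (simp add: l_def field_simps)
    then have "ec_add 1 A B Q P = Pt (l^2 - x1 - x2) (l * (x2 - (l^2 - x2 - x1)) - y2)"
      using P Q False by (simp add: Let_def algebra_simps)
    moreover have "ec_add 1 A B P Q = Pt (l^2 - x1 - x2) (l * (x1 - (l^2 - x1 - x2)) - y1)"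
      using P Q False by (simp add: Let_def l_def)
    ultimately show ?thesis by simp
  qed
qed auto

lemma ec_neg_ec_add: "ec_add 1 A B (ec_neg P) (ec_neg Q) = ec_neg (ec_add 1 A B P Q)"
  for A B :: "'a::field"
proof (cases P; cases Q)
  fix x1 y1 x2 y2 assume P: "P = Pt x1 y1" and Q: "Q = Pt x2 y2"
  have "(3 * x1^2 + A) / (2 * - y1) = - ((3 * x1^2 + A) / (2 * y1))"
       "(y1 - y2) / (x2 - x1) = - ((y2 - y1) / (x2 - x1))"
    by (simp_all add: minus_divide_left)
  then show ?thesis
    using P Q by (cases "x1 = x2"; cases "y1 = - y2") (auto simp: Let_def algebra_simps)
qed auto

lemma ec_add_tangent_cancel:
  fixes x1 y1 A B :: "'a::field_char_0"
  assumes y1: "y1 \<noteq> 0"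
  defines "l \<equiv> (3 * x1^2 + A) / (2 * y1)"
  defines "x3 \<equiv> l^2 - 2 * x1"
  defines "y3 \<equiv> l * (x1 - x3) - y1"
  shows "ec_add 1 A B (Pt x3 y3) (Pt x1 (- y1)) = Pt x1 y1"
proof (cases "x3 = x1")
  case True
  then have y3: "y3 = - y1" by (simp add: y3_def)
  have "(3 * x1^2 + A) / (2 * y3) = - l" using True y3 by (simp add: l_def)
  moreover have "(y3 = - (- y1)) = False" using y3 y1 by simp
  ultimately have "ec_add 1 A B (Pt x3 y3) (Pt x1 (- y1))
      = Pt ((- l)^2 - 2 * x1) ((- l) * (x1 - ((- l)^2 - 2 * x1)) - y3)"
    by (simp only: ec_add_Pt_Pt True Let_def if_True if_False refl)
  also have "\<dots> = Pt x1 y1" using True y3 by (simp add: x3_def)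
  finally show ?thesis .
next
  case False
  then have "(- y1 - y3) / (x1 - x3) = - l" by (simp add: y3_def field_simps)
  then have "ec_add 1 A B (Pt x3 y3) (Pt x1 (- y1))
      = Pt ((- l)^2 - x3 - x1) ((- l) * (x3 - ((- l)^2 - x3 - x1)) - y3)"
    using False by (simp only: ec_add_Pt_Pt Let_def if_False)
  also have "\<dots> = Pt x1 y1" by (simp add: x3_def y3_def algebra_simps power2_eq_square)
  finally show ?thesis .
qed

lemma chord_tangent_at_second_point:
  fixes x1 y1 x2 y2 A l :: "'a::field"
  assumes c1: "y1^2 = x1^3 + A * x1" and c2: "y2^2 = x2^3 + A * x2" and ne: "x1 \<noteq> x2"
    and slope: "l * (x2 - x1) = y2 - y1" and third: "l^2 = x1 + 2 * x2"
  shows "2 * l * y2 = 3 * x2^2 + A"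
proof -
  have "(x2 - x1) * (l * (y2 + y1)) = (x2 - x1) * (x2^2 + x1 * x2 + x1^2 + A)"
    using c1 c2 slope by algebra
  then have "l * (y2 + y1) = x2^2 + x1 * x2 + x1^2 + A" using ne by simp
  moreover have "y1 = y2 - l * (x2 - x1)" using slope by simp
  ultimately show ?thesis using third by algebra
qed

lemma ec_add_chord_cancel:
  fixes x1 y1 x2 y2 A :: "'a::field_char_0"
  assumes A: "A \<noteq> 0" and c1: "y1^2 = x1^3 + A * x1" and c2: "y2^2 = x2^3 + A * x2"
    and ne: "x1 \<noteq> x2"
  defines "l \<equiv> (y2 - y1) / (x2 - x1)"
  defines "x3 \<equiv> l^2 - x1 - x2"
  defines "y3 \<equiv> l * (x1 - x3) - y1"
  shows "ec_add 1 A 0 (Pt x3 y3) (Pt x2 (- y2)) = Pt x1 y1"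
proof -
  have hl: "l * (x2 - x1) = y2 - y1" using ne by (simp add: l_def)
  show ?thesis
  proof (cases "x3 = x2")
    case True
    have y3: "y3 = - y2" using True hl by (simp add: y3_def algebra_simps)
    have ll: "l^2 = x1 + 2 * x2"
      using True unfolding x3_def by (simp add: diff_eq_eq mult_2 ac_simps)
    have tangent: "2 * l * y2 = 3 * x2^2 + A"
      using chord_tangent_at_second_point[OF c1 c2 ne hl ll] .
    \<comment> \<open>a tangent at \<open>(x2, 0)\<close> would make it a singular point, excluded by \<open>A \<noteq> 0\<close>\<close>
    have y2: "y2 \<noteq> 0"
    proof
      assume "y2 = 0"
      then have "3 * x2^2 + A = 0" "x2^3 + A * x2 = 0" using tangent c2 by auto
      then have "x2 * (-2 * x2^2) = 0" by algebra
      then show False using \<open>3 * x2^2 + A = 0\<close> A by simp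
    qed
    have "(3 * x2^2 + A) / (2 * y3) = - l" using y3 tangent y2 by (simp add: field_simps)
    moreover have "(y3 = - (- y2)) = False" using y3 y2 by simp
    ultimately have "ec_add 1 A 0 (Pt x3 y3) (Pt x2 (- y2))
        = Pt ((- l)^2 - 2 * x2) ((- l) * (x2 - ((- l)^2 - 2 * x2)) - y3)"
      by (simp only: ec_add_Pt_Pt True Let_def if_True if_False refl)
    also have "\<dots> = Pt x1 y1" using True y3 ll hl by (simp add: algebra_simps)
    finally show ?thesis .
  next
    case False
    then have "(- y2 - y3) / (x2 - x3) = - l" using hl by (simp add: y3_def field_simps)
    then have "ec_add 1 A 0 (Pt x3 y3) (Pt x2 (- y2))
        = Pt ((- l)^2 - x3 - x2) ((- l) * (x3 - ((- l)^2 - x3 - x2)) - y3)"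
      using False by (simp only: ec_add_Pt_Pt Let_def if_False)
    also have "\<dots> = Pt x1 y1" by (simp add: x3_def y3_def algebra_simps power2_eq_square)
    finally show ?thesis .
  qed
qed

lemma ec_add_ec_neg_cancel:
  fixes A :: "'a::field_char_0"
  assumes A: "A \<noteq> 0" and P: "on_curve 1 A 0 P" and Q: "on_curve 1 A 0 Q"
  shows "ec_add 1 A 0 (ec_add 1 A 0 P Q) (ec_neg Q) = P"
proof (cases P; cases Q)
  fix x1 y1 x2 y2 assume P': "P = Pt x1 y1" and Q': "Q = Pt x2 y2"
  have c1: "y1^2 = x1^3 + A * x1" and c2: "y2^2 = x2^3 + A * x2"
    using P Q P' Q' by (auto simp: on_curve_def)
  show ?thesis
  proof (cases "x1 = x2")
    case True
    show ?thesis
    proof (cases "y1 = - y2")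
      case False
      have "y1^2 = y2^2" using c1 c2 True by simp
      then have "y2 = y1" using False by (auto simp: power2_eq_iff)
      then have "y1 \<noteq> 0" using False by auto
      then show ?thesis
        using ec_add_tangent_cancel[OF \<open>y1 \<noteq> 0\<close>, of A 0] P' Q' True \<open>y2 = y1\<close> by (simp add: Let_def)
    qed (use P' Q' True in simp)
  next
    case False
    then show ?thesis using ec_add_chord_cancel[OF A c1 c2 False] P' Q' by (simp add: Let_def)
  qed
qed auto

lemma ec_neg_ec_add_cancel:
  fixes A :: "'a::field_char_0"
  assumes A: "A \<noteq> 0" and P: "on_curve 1 A 0 P" and R: "on_curve 1 A 0 R"
  shows "ec_add 1 A 0 (ec_neg P) (ec_add 1 A 0 P R) = R"
proof -
  have "ec_add 1 A 0 (ec_neg P) (ec_add 1 A 0 P R) = ec_add 1 A 0 (ec_add 1 A 0 R P) (ec_neg P)"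
    using ec_add_comm[OF on_curve_ec_neg[OF P] on_curve_ec_add[OF P R]] ec_add_comm[OF P R] by simp
  also have "\<dots> = R" using ec_add_ec_neg_cancel[OF A R P] .
  finally show ?thesis .
qed

lemma on_curve_ec_mult:
  fixes A B :: "'a::field_char_0"
  shows "on_curve 1 A B P \<Longrightarrow> on_curve 1 A B (ec_mult 1 A B n P)"
  by (induction n) (simp_all add: on_curve_ec_add)

lemma ec_neg_ec_mult_torsion:
  fixes A :: "'a::field_char_0"
  assumes A: "A \<noteq> 0" and P: "on_curve 1 A 0 P" and N: "ec_mult 1 A 0 N P = Infty" and "n \<le> N"
  shows "ec_neg (ec_mult 1 A 0 n P) = ec_mult 1 A 0 (N - n) P"
  using \<open>n \<le> N\<close>
proof (induction n)
  case 0
  then show ?case using N by simp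
next
  case (Suc n)
  then have "N - n = Suc (N - Suc n)" by simp
  then have "ec_neg (ec_mult 1 A 0 (Suc n) P)
      = ec_add 1 A 0 (ec_neg P) (ec_add 1 A 0 P (ec_mult 1 A 0 (N - Suc n) P))"
    using Suc by (simp add: ec_neg_ec_add[symmetric])
  also have "\<dots> = ec_mult 1 A 0 (N - Suc n) P"
    using ec_neg_ec_add_cancel[OF A P on_curve_ec_mult[OF P]] .
  finally show ?case .
qed

section \<open>Valuation of \<open>x\<close>-coordinates under doubling and addition\<close>

lemma val_ge_div_square:
  assumes "prime p" "X \<noteq> 0" "2 * rat_val p X < rat_val p A"
  shows "val_ge p (A / X^2) 1"
  using assms by (cases "A = 0") (auto simp: val_ge_def rat_val_divide rat_val_power)

lemma rat_val_y:
  assumes p: "prime p" and c: "Y^2 = X^3 + A * X" and X: "X \<noteq> 0"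
    and small: "2 * rat_val p X < rat_val p A"
  shows "Y \<noteq> 0" "2 * rat_val p Y = 3 * rat_val p X"
proof -
  note u = rat_val_one_plus[OF p val_ge_div_square[OF p X small]]
  have e: "Y^2 = X^3 * (1 + A / X^2)"
    using c X by (simp add: field_simps power2_eq_square power3_eq_cube)
  then show "Y \<noteq> 0" using u X by auto
  then show "2 * rat_val p Y = 3 * rat_val p X"
    using arg_cong[OF e, of "rat_val p"] u X p by (simp add: rat_val_mult rat_val_power)
qed

lemma rat_val_x_double:
  assumes c: "Y^2 = X^3 + A * X" and X: "X \<noteq> 0" and small: "2 * rat_val 2 X < rat_val 2 A"
  defines "l \<equiv> (3 * X^2 + A) / (2 * Y)"
  shows "l^2 - 2 * X \<noteq> 0" "rat_val 2 (l^2 - 2 * X) = rat_val 2 X - 2"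
proof -
  have p: "prime (2::int)" by simp
  have Y: "Y \<noteq> 0" using rat_val_y[OF p c X small] by simp
  have small': "val_ge 2 (- (A / X^2)) 1" using val_ge_div_square[OF p X small] by simp
  note u1 = rat_val_one_plus[OF p val_ge_div_square[OF p X small]]
  note u2 = rat_val_one_plus[OF p small']
  have e1: "X^2 + A = X^2 * (1 + A / X^2)" and e2: "X^2 - A = X^2 * (1 + - (A / X^2))"
    using X by (simp_all add: field_simps)
  have nz: "X^2 + A \<noteq> 0" "X^2 - A \<noteq> 0" using e1 e2 u1 u2 X by simp_all
  have v: "rat_val 2 (X^2 + A) = 2 * rat_val 2 X" "rat_val 2 (X^2 - A) = 2 * rat_val 2 X"
    using e1 e2 u1 u2 X by (simp_all add: rat_val_mult rat_val_power)
  have id: "l^2 - 2 * X = (X^2 - A)^2 / (4 * (X * (X^2 + A)))"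
  proof -
    have "l^2 - 2 * X = ((3 * X^2 + A)^2 - 8 * X * Y^2) / (4 * Y^2)"
      using Y by (simp add: l_def field_simps power2_eq_square)
    also have "(3 * X^2 + A)^2 - 8 * X * Y^2 = (X^2 - A)^2" unfolding c by algebra
    also have "4 * Y^2 = 4 * (X * (X^2 + A))" unfolding c by algebra
    finally show ?thesis .
  qed
  have four: "rat_val 2 4 = 2"
    using rat_val_power[OF p, of 2 2] rat_val_self[OF p] by simp
  show "l^2 - 2 * X \<noteq> 0" using id nz X by simp
  have "rat_val 2 (l^2 - 2 * X) = rat_val 2 ((X^2 - A)^2) - rat_val 2 (4 * (X * (X^2 + A)))"
    unfolding id using nz X by (intro rat_val_divide[OF p]) auto
  also have "\<dots> = rat_val 2 X - 2" using X nz v four by (simp add: rat_val_power rat_val_mult)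
  finally show "rat_val 2 (l^2 - 2 * X) = rat_val 2 X - 2" .
qed

lemma formal_parameters_val:
  assumes p: "prime p" and c: "Y^2 = X^3 + A * X" and X: "X \<noteq> 0"
    and small: "2 * rat_val p X < rat_val p A"
  obtains e where "rat_val p X = - 2 * e" "val_ge p (X / Y) e" "val_ge p (1 / Y) (3 * e)"
proof
  have Y: "Y \<noteq> 0" and vY: "2 * rat_val p Y = 3 * rat_val p X"
    using rat_val_y[OF p c X small] by auto
  show "rat_val p X = - 2 * (rat_val p X - rat_val p Y)" using vY by simp
  show "val_ge p (X / Y) (rat_val p X - rat_val p Y)"
    using X Y p by (simp add: val_ge_def rat_val_divide)
  show "val_ge p (1 / Y) (3 * (rat_val p X - rat_val p Y))"
    using Y vY p by (simp add: val_ge_def rat_val_divide)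
qed

lemma chord_x_formal:
  fixes X1 Y1 X2 Y2 A :: "'a::field"
  assumes c1: "Y1^2 = X1^3 + A * X1" and c2: "Y2^2 = X2^3 + A * X2"
    and nz: "X1 \<noteq> 0" "X2 \<noteq> 0" "Y1 \<noteq> 0" "Y2 \<noteq> 0" and ne: "X1 \<noteq> X2"
  defines "t1 \<equiv> X1 / Y1" and "t2 \<equiv> X2 / Y2" and "s1 \<equiv> 1 / Y1" and "s2 \<equiv> 1 / Y2"
  assumes U: "1 - A * t1 * (s1 + s2) \<noteq> 0"
  defines "\<alpha> \<equiv> (t1^2 + t1 * t2 + t2^2 + A * s2^2) / (1 - A * t1 * (s1 + s2))"
  defines "\<beta> \<equiv> - (t1 * t2 * (t1 + t2 + A * \<alpha> * (s1 + s2)))"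
    and "l \<equiv> (Y2 - Y1) / (X2 - X1)"
  shows "\<beta> \<noteq> 0" "l^2 - X1 - X2 = 1 / (\<beta>^2 * (X1 * X2))"
proof -
  have formal: "s = t^3 + A * t * s^2" if "Y^2 = X^3 + A * X" "Y \<noteq> 0" "t = X / Y" "s = 1 / Y"
    for X Y s t :: 'a
    using that by (simp add: field_simps power2_eq_square power3_eq_cube) algebra
  have s1: "s1 = t1^3 + A * t1 * s1^2" and s2: "s2 = t2^3 + A * t2 * s2^2"
    using formal c1 c2 nz by (simp_all add: t1_def t2_def s1_def s2_def)
  \<comment> \<open>\<open>\<alpha>\<close> is the slope and \<open>\<beta>\<close> the \<open>s\<close>-intercept of the chord in the coordinates \<open>t = x/y, s = 1/y\<close>\<close>
  have slope:
    "(s2 - s1) * (1 - A * t1 * (s1 + s2)) = (t2 - t1) * (t1^2 + t1 * t2 + t2^2 + A * s2^2)"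
    using s1 s2 by algebra
  have "t1 \<noteq> t2"
  proof
    assume "t1 = t2"
    then have "s1 = s2" using slope U by simp
    then show False using \<open>t1 = t2\<close> ne nz by (simp add: t1_def t2_def s1_def s2_def)
  qed
  then have "s2 - s1 = \<alpha> * (t2 - t1)" using slope U by (simp add: \<alpha>_def field_simps)
  then have intercept: "s1 * t2 - s2 * t1 = (t2 - t1) * \<beta>"
    using s1 s2 unfolding \<beta>_def by algebra
  moreover have "s1 * t2 - s2 * t1 = (X2 - X1) / (Y1 * Y2)"
    and t: "t2 - t1 = (X2 * Y1 - X1 * Y2) / (Y1 * Y2)"
    using nz by (simp_all add: s1_def s2_def t1_def t2_def field_simps)
  ultimately have "X2 - X1 = (X2 * Y1 - X1 * Y2) * \<beta>" using nz by (simp add: field_simps)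
  moreover have "X2 * Y1 - X1 * Y2 \<noteq> 0" using t \<open>t1 \<noteq> t2\<close> by auto
  ultimately have \<beta>: "\<beta> = (X2 - X1) / (X2 * Y1 - X1 * Y2)" by (simp add: eq_divide_eq)
  then show "\<beta> \<noteq> 0" using ne \<open>X2 * Y1 - X1 * Y2 \<noteq> 0\<close> by simp
  have "l * (X2 - X1) = Y2 - Y1" using ne by (simp add: l_def)
  then have "X1 * X2 * (l^2 - X1 - X2) = (Y1 - l * X1)^2" using c1 c2 ne by algebra
  then have "l^2 - X1 - X2 = (Y1 - l * X1)^2 / (X1 * X2)"
    using nz by (simp add: eq_divide_eq mult.commute)
  also have "Y1 - l * X1 = 1 / \<beta>"
    unfolding \<beta> using ne by (simp add: l_def field_simps)
  finally show "l^2 - X1 - X2 = 1 / (\<beta>^2 * (X1 * X2))" by (simp add: power_one_over)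
qed

lemma formal_chord_val:
  assumes p: "prime p" and "e1 \<le> e2" and A: "val_ge p A (1 - 4 * e1)"
    and t1: "val_ge p t1 e1" and t2: "val_ge p t2 e2"
    and s1: "val_ge p s1 (3 * e1)" and s2: "val_ge p s2 (3 * e2)"
  defines "\<alpha> \<equiv> (t1^2 + t1 * t2 + t2^2 + A * s2^2) / (1 - A * t1 * (s1 + s2))"
  defines "\<beta> \<equiv> - (t1 * t2 * (t1 + t2 + A * \<alpha> * (s1 + s2)))"
  shows "1 - A * t1 * (s1 + s2) \<noteq> 0" "val_ge p \<beta> (2 * e1 + e2)"
proof -
  have t2': "val_ge p t2 e1" and s2': "val_ge p s2 (3 * e1)"
    using t2 s2 \<open>e1 \<le> e2\<close> by (auto intro: val_ge_mono)
  note val_ge_rules = val_ge_add[OF p] val_ge_mult[OF p]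
  have "val_ge p (A * t1 * (s1 + s2)) ((1 - 4 * e1) + e1 + 3 * e1)"
    by (intro val_ge_rules A t1 s1 s2')
  then have "val_ge p (- (A * t1 * (s1 + s2))) 1" by simp
  from rat_val_one_plus[OF p this]
  have U: "1 - A * t1 * (s1 + s2) \<noteq> 0" "rat_val p (1 - A * t1 * (s1 + s2)) = 0" by simp_all
  then show "1 - A * t1 * (s1 + s2) \<noteq> 0" by simp
  from U have "val_ge p (inverse (1 - A * t1 * (s1 + s2))) 0"
    by (simp add: val_ge_def rat_val_inverse[OF p])
  moreover have "val_ge p (t1^2 + t1 * t2 + t2^2 + A * s2^2) (2 * e1)"
  proof -
    have "val_ge p (A * s2^2) ((1 - 4 * e1) + (3 * e1 + 3 * e1))"
      unfolding power2_eq_square by (intro val_ge_rules A s2')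
    then have "val_ge p (A * s2^2) (2 * e1)" by (rule val_ge_mono) simp
    then show ?thesis
      unfolding power2_eq_square using val_ge_rules t1 t2' by (metis mult_2)
  qed
  ultimately have \<alpha>: "val_ge p \<alpha> (2 * e1)"
    using val_ge_mult[OF p] unfolding \<alpha>_def divide_inverse by fastforce
  have "val_ge p (A * \<alpha> * (s1 + s2)) ((1 - 4 * e1) + 2 * e1 + 3 * e1)"
    by (intro val_ge_rules A \<alpha> s1 s2')
  then have sum: "val_ge p (t1 + t2 + A * \<alpha> * (s1 + s2)) e1"
    by (intro val_ge_rules t1 t2') (auto elim: val_ge_mono)
  have "2 * e1 + e2 = e1 + e2 + e1" by simp
  then show "val_ge p \<beta> (2 * e1 + e2)"
    using val_ge_mult[OF p val_ge_mult[OF p t1 t2] sum] unfolding \<beta>_def val_ge_uminus by simp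
qed

lemma rat_val_x_chord:
  assumes p: "prime p" and c1: "Y1^2 = X1^3 + A * X1" and c2: "Y2^2 = X2^3 + A * X2"
    and X1: "X1 \<noteq> 0" and X2: "X2 \<noteq> 0" and small: "2 * rat_val p X1 < rat_val p A"
    and le: "rat_val p X2 \<le> rat_val p X1" and ne: "X1 \<noteq> X2"
  defines "l \<equiv> (Y2 - Y1) / (X2 - X1)"
  shows "l^2 - X1 - X2 \<noteq> 0" "rat_val p (l^2 - X1 - X2) \<le> rat_val p X1"
proof -
  have small2: "2 * rat_val p X2 < rat_val p A" using small le by simp
  have Y1: "Y1 \<noteq> 0" and Y2: "Y2 \<noteq> 0"
    using rat_val_y[OF p c1 X1 small] rat_val_y[OF p c2 X2 small2] by auto
  obtain e1 where e1: "rat_val p X1 = - 2 * e1"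
    and f1: "val_ge p (X1 / Y1) e1" "val_ge p (1 / Y1) (3 * e1)"
    using formal_parameters_val[OF p c1 X1 small] .
  obtain e2 where e2: "rat_val p X2 = - 2 * e2"
    and f2: "val_ge p (X2 / Y2) e2" "val_ge p (1 / Y2) (3 * e2)"
    using formal_parameters_val[OF p c2 X2 small2] .
  have "e1 \<le> e2" "val_ge p A (1 - 4 * e1)"
    using le small e1 e2 by (simp_all add: val_ge_def)
  note formal = formal_chord_val[OF p this f1(1) f2(1) f1(2) f2(2)]
  obtain \<beta> where "val_ge p \<beta> (2 * e1 + e2)" "\<beta> \<noteq> 0"
    "l^2 - X1 - X2 = 1 / (\<beta>^2 * (X1 * X2))"
    using formal chord_x_formal[OF c1 c2 X1 X2 Y1 Y2 ne formal(1)] unfolding l_def by blast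
  then show "l^2 - X1 - X2 \<noteq> 0" "rat_val p (l^2 - X1 - X2) \<le> rat_val p X1"
    using X1 X2 e1 e2 p
    by (simp_all add: val_ge_def rat_val_inverse rat_val_mult rat_val_power divide_inverse)
qed

section \<open>Points with small \<open>x\<close>-coordinate have infinite order\<close>

definition small_x_points :: "rat \<Rightarrow> int \<Rightarrow> rat ecpt set" where
  "small_x_points A b =
     insert Infty {Pt X Y | X Y. Y^2 = X^3 + A * X \<and> X \<noteq> 0 \<and> rat_val 2 X \<le> b}"

lemma small_x_points_on_curve: "R \<in> small_x_points A b \<Longrightarrow> on_curve 1 A 0 R"
  by (auto simp: small_x_points_def on_curve_def)

lemma ec_neg_small_x_points: "R \<in> small_x_points A b \<Longrightarrow> ec_neg R \<in> small_x_points A b"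
  by (auto simp: small_x_points_def)

lemma ec_add_small_x_points:
  assumes c0: "Y0^2 = X0^3 + A * X0" and X0: "X0 \<noteq> 0" and small: "2 * rat_val 2 X0 < rat_val 2 A"
    and R: "R \<in> small_x_points A (rat_val 2 X0)"
  shows "ec_add 1 A 0 (Pt X0 Y0) R \<in> small_x_points A (rat_val 2 X0)"
proof (cases R)
  case Infty
  then show ?thesis using c0 X0 by (simp add: small_x_points_def)
next
  case (Pt X Y)
  have c: "Y^2 = X^3 + A * X" and X: "X \<noteq> 0" and le: "rat_val 2 X \<le> rat_val 2 X0"
    using R Pt by (auto simp: small_x_points_def)
  have "on_curve 1 A 0 (ec_add 1 A 0 (Pt X0 Y0) R)"
    using on_curve_ec_add[of A 0 "Pt X0 Y0" R] small_x_points_on_curve[OF R] c0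
      by (simp add: on_curve_Pt)
  moreover have "ec_add 1 A 0 (Pt X0 Y0) R = Infty \<or>
      (\<exists>X' Y'. ec_add 1 A 0 (Pt X0 Y0) R = Pt X' Y' \<and> X' \<noteq> 0 \<and> rat_val 2 X' \<le> rat_val 2 X0)"
  proof (cases "X0 = X")
    case True
    show ?thesis
    proof (cases "Y0 = - Y")
      case False
      then have "ec_add 1 A 0 (Pt X0 Y0) R
          = (let l = (3 * X0^2 + A) / (2 * Y0); X' = l^2 - 2 * X0 in Pt X' (l * (X0 - X') - Y0))"
        using Pt True by simp
      then show ?thesis using rat_val_x_double[OF c0 X0 small] by (auto simp: Let_def)
    qed (use Pt True in simp)
  next
    case False
    then have "ec_add 1 A 0 (Pt X0 Y0) R
        = (let l = (Y - Y0) / (X - X0); X' = l^2 - X0 - X in Pt X' (l * (X0 - X') - Y0))"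
      using Pt by simp
    then show ?thesis
      using rat_val_x_chord[OF _ c0 c X0 X small le False] by (auto simp: Let_def)
  qed
  ultimately show ?thesis by (auto simp: small_x_points_def on_curve_Pt)
qed

lemma ec_mult_small_x_points:
  assumes "Y0^2 = X0^3 + A * X0" "X0 \<noteq> 0" "2 * rat_val 2 X0 < rat_val 2 A"
  shows "ec_mult 1 A 0 n (Pt X0 Y0) \<in> small_x_points A (rat_val 2 X0)"
proof (induction n)
  case 0
  then show ?case by (simp add: small_x_points_def)
qed (simp add: ec_add_small_x_points[OF assms])

lemma ec_double_ne_small_x:
  assumes c0: "Y0^2 = X0^3 + A * X0" and X0: "X0 \<noteq> 0" and small: "2 * rat_val 2 X0 < rat_val 2 A"
    and R: "R \<in> small_x_points A (rat_val 2 X0)"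
  shows "ec_add 1 A 0 R R \<noteq> Pt X0 Y0"
proof
  assume double: "ec_add 1 A 0 R R = Pt X0 Y0"
  then obtain X Y where R': "R = Pt X Y" and c: "Y^2 = X^3 + A * X" and X: "X \<noteq> 0"
    and le: "rat_val 2 X \<le> rat_val 2 X0"
    using R by (auto simp: small_x_points_def)
  have "2 * rat_val 2 X < rat_val 2 A" using small le by simp
  with rat_val_x_double[OF c X this] rat_val_y[OF _ c X this] double
  show False using R' le by (auto simp: Let_def)
qed

lemma ec_mult_ne_Infty_if_small_x:
  assumes A: "A \<noteq> 0" and c0: "Y0^2 = X0^3 + A * X0" and X0: "X0 \<noteq> 0"
    and small: "2 * rat_val 2 X0 < rat_val 2 A" and "n > 0"
  shows "ec_mult 1 A 0 n (Pt X0 Y0) \<noteq> Infty"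
proof
  assume torsion: "ec_mult 1 A 0 n (Pt X0 Y0) = Infty"
  define P where "P = Pt X0 Y0"
  define Q where "Q k = ec_mult 1 A 0 k P" for k
  have P: "on_curve 1 A 0 P" using c0 by (simp add: P_def on_curve_Pt)
  have Q: "Q k \<in> small_x_points A (rat_val 2 X0)" for k
    using ec_mult_small_x_points[OF c0 X0 small] by (simp add: Q_def P_def)
  define N where "N = (LEAST k. 0 < k \<and> Q k = Infty)"
  have N: "0 < N" "Q N = Infty"
    using LeastI[of "\<lambda>k. 0 < k \<and> Q k = Infty" n] torsion \<open>n > 0\<close> by (auto simp: N_def Q_def P_def)
  have finite_Q: "Q k \<noteq> Infty" if "0 < k" "k < N" for k
    using not_less_Least[of k "\<lambda>k. 0 < k \<and> Q k = Infty"] that by (auto simp: N_def)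
  have neg: "ec_neg (Q k) = Q (N - k)" if "k \<le> N" for k
    using ec_neg_ec_mult_torsion[OF A P N(2)[unfolded Q_def] that] by (simp add: Q_def)
  show False
  proof (cases "even N")
    case True
    then obtain j where j: "N = 2 * j" by blast
    then obtain X Y where "Q j = Pt X Y" "Y^2 = X^3 + A * X" "X \<noteq> 0" "rat_val 2 X \<le> rat_val 2 X0"
      using Q[of j] finite_Q[of j] N(1) by (auto simp: small_x_points_def)
    moreover have "ec_neg (Q j) = Q j" using neg[of j] j by simp
    ultimately show False using rat_val_y[of 2 Y X A] small by auto
  next
    case False
    then obtain j where j: "N = Suc (2 * j)" using oddE by fastforce
    have "ec_neg (Q j) = ec_add 1 A 0 P (Q j)" using neg[of j] j by (simp add: Q_def)
    then have "ec_add 1 A 0 (ec_neg (Q j)) (ec_neg (Q j))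
        = ec_add 1 A 0 (ec_add 1 A 0 P (Q j)) (ec_neg (Q j))"
      by simp
    also have "\<dots> = P" using ec_add_ec_neg_cancel[OF A P small_x_points_on_curve[OF Q]] .
    finally show False
      using ec_double_ne_small_x[OF c0 X0 small ec_neg_small_x_points[OF Q]] by (simp add: P_def)
  qed
qed

section \<open>Twisting \<open>k y\<^sup>2 = x\<^sup>3 + a x\<close> into \<open>y\<^sup>2 = x\<^sup>3 + A x\<close>\<close>

fun ec_scale :: "'a::times \<Rightarrow> 'a \<Rightarrow> 'a ecpt \<Rightarrow> 'a ecpt" where
  "ec_scale \<alpha> \<beta> Infty = Infty"
| "ec_scale \<alpha> \<beta> (Pt x y) = Pt (\<alpha> * x) (\<beta> * y)"

lemma ec_scale_third_point:
  fixes k \<alpha> \<beta> l :: "'a::field"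
  assumes "\<alpha> \<noteq> 0" "\<beta>^2 = k * \<alpha>^3"
  defines "l' \<equiv> \<beta> / \<alpha> * l"
  shows "ec_scale \<alpha> \<beta> (Pt (k * l^2 - S) (l * (x - (k * l^2 - S)) - y))
    = Pt (l'^2 - \<alpha> * S) (l' * (\<alpha> * x - (l'^2 - \<alpha> * S)) - \<beta> * y)"
proof -
  have l'\<alpha>: "l' * \<alpha> = \<beta> * l" using assms(1) by (simp add: l'_def)
  then have "\<alpha>^2 * (l'^2 - \<alpha> * (k * l^2)) = 0" using assms(2) by algebra
  then have sq: "l'^2 = \<alpha> * (k * l^2)" using assms(1) by simp
  have "l' * (\<alpha> * x - (l'^2 - \<alpha> * S)) = \<beta> * (l * (x - (k * l^2 - S)))"
    unfolding sq using l'\<alpha> by algebra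
  then show ?thesis using sq by (simp add: algebra_simps)
qed

lemma ec_scale_tangent_slope:
  fixes k a \<alpha> \<beta> :: "'a::field"
  assumes \<alpha>: "\<alpha> \<noteq> 0" and \<beta>: "\<beta> \<noteq> 0" and rel: "\<beta>^2 = k * \<alpha>^3"
  shows "(3 * (\<alpha> * x)^2 + a * \<alpha>^2) / (2 * (\<beta> * y)) = \<beta> / \<alpha> * ((3 * x^2 + a) / (2 * k * y))"
proof -
  have "k \<noteq> 0" using rel \<beta> by auto
  then have "\<alpha>^2 / \<beta> = \<beta> / (\<alpha> * k)"
    using rel \<alpha> \<beta> by (simp add: field_simps power2_eq_square power3_eq_cube)
  moreover have "(3 * (\<alpha> * x)^2 + a * \<alpha>^2) / (2 * (\<beta> * y)) = \<alpha>^2 / \<beta> * ((3 * x^2 + a) / (2 * y))"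
    by (simp add: field_simps power_mult_distrib)
  moreover have "\<beta> / \<alpha> * ((3 * x^2 + a) / (2 * k * y)) = \<beta> / (\<alpha> * k) * ((3 * x^2 + a) / (2 * y))"
    by (simp add: field_simps)
  ultimately show ?thesis by simp
qed

lemma ec_scale_ec_add:
  fixes k a \<alpha> \<beta> :: "'a::field"
  assumes \<alpha>: "\<alpha> \<noteq> 0" and \<beta>: "\<beta> \<noteq> 0" and rel: "\<beta>^2 = k * \<alpha>^3"
  shows "ec_scale \<alpha> \<beta> (ec_add k a 0 P Q)
    = ec_add 1 (a * \<alpha>^2) 0 (ec_scale \<alpha> \<beta> P) (ec_scale \<alpha> \<beta> Q)"
proof (cases P; cases Q)
  fix x1 y1 x2 y2 assume P: "P = Pt x1 y1" and Q: "Q = Pt x2 y2"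
  note third = ec_scale_third_point[OF \<alpha> rel]
  show ?thesis
  proof (cases "x1 = x2")
    case True
    show ?thesis
    proof (cases "y1 = - y2")
      case False
      then have "\<beta> * y1 \<noteq> - (\<beta> * y2)" using \<beta> by (metis mult_minus_right mult_left_cancel)
      define l where "l = (3 * x1^2 + a) / (2 * k * y1)"
      have "(3 * (\<alpha> * x1)^2 + a * \<alpha>^2) / (2 * (\<beta> * y1)) = \<beta> / \<alpha> * l"
        unfolding l_def by (rule ec_scale_tangent_slope[OF \<alpha> \<beta> rel])
      then show ?thesis using P Q True False \<open>\<beta> * y1 \<noteq> - (\<beta> * y2)\<close> third[of l "2 * x1" x1 y1]
        by (simp add: Let_def l_def)
    qed (use P Q True in simp)
  next
    case False
    define l where "l = (y2 - y1) / (x2 - x1)"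
    have slope: "(\<beta> * y2 - \<beta> * y1) / (\<alpha> * x2 - \<alpha> * x1) = \<beta> / \<alpha> * l"
      using False \<alpha> by (simp add: l_def field_simps)
    have "(\<alpha> * x1 = \<alpha> * x2) = False" using False \<alpha> by simp
    then have "ec_add 1 (a * \<alpha>^2) 0 (ec_scale \<alpha> \<beta> P) (ec_scale \<alpha> \<beta> Q)
        = Pt ((\<beta> / \<alpha> * l)^2 - \<alpha> * x1 - \<alpha> * x2)
             (\<beta> / \<alpha> * l * (\<alpha> * x1 - ((\<beta> / \<alpha> * l)^2 - \<alpha> * x1 - \<alpha> * x2)) - \<beta> * y1)"
      using P Q by (simp only: ec_scale.simps ec_add.simps if_False slope Let_def mult_1)
    also have "\<dots> = ec_scale \<alpha> \<beta> (Pt (k * l^2 - (x1 + x2)) (l * (x1 - (k * l^2 - (x1 + x2))) - y1))"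
      using third[of l "x1 + x2" x1 y1] by (simp add: algebra_simps)
    also have "\<dots> = ec_scale \<alpha> \<beta> (ec_add k a 0 P Q)"
      using P Q False by (simp add: Let_def l_def diff_diff_eq)
    finally show ?thesis by simp
  qed
qed auto

lemma ec_scale_ec_mult:
  fixes k a \<alpha> \<beta> :: "'a::field"
  assumes "\<alpha> \<noteq> 0" "\<beta> \<noteq> 0" "\<beta>^2 = k * \<alpha>^3"
  shows "ec_scale \<alpha> \<beta> (ec_mult k a 0 n P) = ec_mult 1 (a * \<alpha>^2) 0 n (ec_scale \<alpha> \<beta> P)"
  by (induction n) (simp_all add: ec_scale_ec_add[OF assms])

lemma positive_rank_if_small_x:
  assumes k: "k \<noteq> 0" and a: "a \<noteq> 0" and c: "k * y^2 = x^3 + a * x" and x: "x \<noteq> 0"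
    and small: "2 * rat_val 2 x < rat_val 2 a"
  shows "positive_rank k a 0"
  unfolding positive_rank_def
proof (intro exI conjI allI impI)
  show "on_curve k a 0 (Pt x y)" using c by (simp add: on_curve_Pt)
  fix n :: nat assume "n > 0"
  have "(k^2 * y)^2 = (k * x)^3 + (a * k^2) * (k * x)"
    using c by (simp add: power_mult_distrib power2_eq_square power3_eq_cube) algebra
  moreover have "2 * rat_val 2 (k * x) < rat_val 2 (a * k^2)"
    using small k x a by (simp add: rat_val_mult rat_val_power)
  ultimately have "ec_mult 1 (a * k^2) 0 n (Pt (k * x) (k^2 * y)) \<noteq> Infty"
    using ec_mult_ne_Infty_if_small_x[OF _ _ _ _ \<open>n > 0\<close>] a k x by simp
  moreover have "ec_scale k (k^2) (ec_mult k a 0 n (Pt x y))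
      = ec_mult 1 (a * k^2) 0 n (Pt (k * x) (k^2 * y))"
    using ec_scale_ec_mult[of k "k^2" k a n "Pt x y"] k
      by (simp add: power3_eq_cube power2_eq_square)
  ultimately show "ec_mult k a 0 n (Pt x y) \<noteq> Infty" by auto
qed

section \<open>Rationals of large valuation are dense\<close>

lemma val_ge_prime_power_fraction:
  assumes p: "prime p" and q: "\<not> p dvd q"
  shows "val_ge p (of_int (p ^ s * m) / of_int q) (int s)"
proof (cases "m = 0")
  case False
  have "multiplicity p q = 0" using q by (rule not_dvd_imp_multiplicity_0)
  moreover have "multiplicity p (p ^ s * m) = s + multiplicity p m"
    using False p by (simp add: prime_elem_multiplicity_mult_distrib[OF prime_imp_prime_elem[OF p]]
        multiplicity_prime_power[OF prime_imp_prime_elem[OF p]])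
  moreover have "q \<noteq> 0" using q by auto
  then have "rat_val p (of_int (p ^ s * m) / of_int q)
      = int (multiplicity p (p ^ s * m)) - int (multiplicity p q)"
    using False p by (intro rat_val_of_int_divide) auto
  ultimately show ?thesis by (simp add: val_ge_def)
qed simp

lemma val_ge_rat_dense:
  fixes lo hi :: real
  assumes p: "prime p" and "lo < hi"
  obtains r :: rat where "val_ge p r \<sigma>" "lo < of_rat r" "of_rat r < hi"
proof -
  define s where "s = nat \<sigma>"
  define u :: real where "u = of_int (p ^ s)"
  have "p > 1" using p prime_gt_1_int by blast
  then have u: "u > 0" by (simp add: u_def)
  obtain N :: nat where N: "u / (hi - lo) < real N" using reals_Archimedean2 by blast
  define q where "q = p * int N + 1"
  have "int N \<le> p * int N" using \<open>p > 1\<close> mult_right_mono[of 1 p "int N"] by simp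
  then have "q > 0" "int N < q" by (simp_all add: q_def)
  then have q: "q > 0" "real N < of_int q" by (simp, metis of_int_less_iff of_int_of_nat_eq)
  have "u < real N * (hi - lo)" using N \<open>lo < hi\<close> by (simp add: divide_less_eq)
  also have "\<dots> < of_int q * (hi - lo)" using q \<open>lo < hi\<close> by (simp add: mult_strict_right_mono)
  finally have step: "u / of_int q < hi - lo" using q by (simp add: divide_less_eq mult.commute)
  define m where "m = \<lfloor>lo * of_int q / u\<rfloor> + 1"
  define r where "r = of_int (p ^ s * m) / (of_int q :: rat)"
  have r: "of_rat r = u * of_int m / of_int q"
    by (simp add: r_def u_def of_rat_divide of_rat_mult of_rat_power)
  have "lo * of_int q / u < of_int m" "of_int m - 1 \<le> lo * of_int q / u" unfolding m_def
    by linarith+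
  then have "lo * of_int q < of_int m * u" "(of_int m - 1) * u \<le> lo * of_int q"
    using u by (simp_all only: pos_divide_less_eq pos_le_divide_eq)
  then have "lo * of_int q < u * of_int m" "u * of_int m \<le> lo * of_int q + u"
    by (simp_all add: algebra_simps)
  then have "lo < u * of_int m / of_int q" "u * of_int m / of_int q \<le> lo + u / of_int q"
    using q by (simp_all add: pos_less_divide_eq pos_divide_le_eq algebra_simps)
  then have "lo < of_rat r" "of_rat r < hi" using step r by simp_all
  moreover have "\<not> p dvd q" using \<open>p > 1\<close> by (simp add: q_def zdvd_not_zless dvd_add_right_iff)
  then have "val_ge p r \<sigma>"
    unfolding r_def by (rule val_ge_mono[OF val_ge_prime_power_fraction[OF p]]) (simp add: s_def)
  ultimately show ?thesis using that by blast
qed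

lemma val_ge_div_power_dense:
  fixes K u v :: rat
  assumes p: "prime p" and n: "n > 0" and K: "0 < K" and u: "0 \<le> u" "u < v"
  obtains r where "r \<noteq> 0" "val_ge p r \<sigma>" "u < K / r^n" "K / r^n < v"
proof -
  define w where "w = (u + v) / 2"
  have w: "u < w" "w < v" "0 < w" using u by (simp_all add: w_def)
  have "0 < K / v" "K / v < K / w" using K w by (simp_all add: divide_strict_left_mono)
  then have "0 < root n (of_rat (K / v))" "root n (of_rat (K / v)) < root n (of_rat (K / w))"
    using n by (simp_all add: of_rat_less)
  then obtain r where r: "val_ge p r \<sigma>"
    "root n (of_rat (K / v)) < of_rat r" "of_rat r < root n (of_rat (K / w))"
    using val_ge_rat_dense[OF p] by metis
  then have "(0::real) < of_rat r" using \<open>0 < root n (of_rat (K / v))\<close> by linarith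
  then have "0 < r" by simp
  have "of_rat (K / v) < (of_rat r :: real) ^ n"
    using power_strict_mono[OF r(2) _ n] \<open>0 < K / v\<close> n by (simp add: real_root_pow_pos)
  moreover have "(of_rat r :: real) ^ n < of_rat (K / w)"
    using power_strict_mono[OF r(3) _ n] \<open>0 < r\<close> \<open>K / v < K / w\<close> \<open>0 < K / v\<close> n
    by (simp add: real_root_pow_pos)
  ultimately have "K / v < r ^ n" "r ^ n < K / w" by (simp_all add: of_rat_less flip: of_rat_power)
  then have "K / r ^ n < v" "w < K / r ^ n"
    using \<open>0 < r\<close> w by (simp_all add: divide_less_eq less_divide_eq mult.commute)
  then show ?thesis using that[of r] \<open>0 < r\<close> r(1) \<open>u < w\<close> by simp
qed

section \<open>The quartic fibres\<close>

lemma positive_rank_quartic_fibre: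
  fixes a c d r :: rat
  assumes a: "a \<noteq> 0" and c: "c \<noteq> 0" and r: "r \<noteq> 0"
    and r_val: "val_ge 2 r (\<bar>rat_val 2 a\<bar> + \<bar>rat_val 2 c\<bar> + \<bar>rat_val 2 d\<bar> + 1)"
  defines "t \<equiv> (a / r^4 - d) / c"
  shows "t^4 + c * t + d \<noteq> 0" "positive_rank (t^4 + c * t + d) a 0"
proof -
  have p: "prime (2::int)" by simp
  define \<rho> where "\<rho> = rat_val 2 r"
  have \<rho>: "\<bar>rat_val 2 a\<bar> + \<bar>rat_val 2 c\<bar> + \<bar>rat_val 2 d\<bar> + 1 \<le> \<rho>"
    using r_val r by (simp add: val_ge_def \<rho>_def)
  define m where "m = t * r"
  have "m * c = a / r^3 + - (d * r)"
    using c r by (simp add: m_def t_def field_simps power3_eq_cube power4_eq_xxxx)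
  moreover have "rat_val 2 (a / r^3) = rat_val 2 a - 3 * \<rho>"
    using a r by (simp add: rat_val_divide rat_val_power \<rho>_def)
  moreover have "val_ge 2 (- (d * r)) (rat_val 2 a - 3 * \<rho> + 1)"
    using \<rho> r by (cases "d = 0") (auto simp: val_ge_def rat_val_mult \<rho>_def)
  ultimately have "m * c \<noteq> 0" "rat_val 2 (m * c) = rat_val 2 a - 3 * \<rho>"
    using rat_val_add_eq[OF p, of "a / r^3" "- (d * r)"] a r by auto
  then have "m \<noteq> 0" and m_small: "4 * rat_val 2 m < rat_val 2 a"
    using c \<rho> by (auto simp: rat_val_mult)
  define k where "k = t^4 + c * t + d"
  have k: "k = (m^4 + a) / r^4"
    using c r by (simp add: k_def m_def t_def field_simps power_mult_distrib) algebra
  have "val_ge 2 a (rat_val 2 (m^4) + 1)"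
    using m_small by (simp add: val_ge_def rat_val_power)
  then have "k \<noteq> 0" using rat_val_add_eq[OF p, of "m^4" a] \<open>m \<noteq> 0\<close> r by (simp add: k)
  moreover have "k * (t * r^3)^2 = (m^2)^3 + a * m^2"
    using r by (simp add: k m_def field_simps power_mult_distrib)
  moreover have "2 * rat_val 2 (m^2) < rat_val 2 a"
    using m_small by (simp add: rat_val_power)
  moreover have "m^2 \<noteq> 0" using \<open>m \<noteq> 0\<close> by simp
  ultimately have "positive_rank k a 0" by (intro positive_rank_if_small_x[OF _ a])
  then show "t^4 + c * t + d \<noteq> 0" "positive_rank (t^4 + c * t + d) a 0"
    using \<open>k \<noteq> 0\<close> by (simp_all add: k_def)
qed

lemma quartic_fibre_parameter_between:
  fixes a c d u v :: rat
  assumes c: "c \<noteq> 0" and "u < v" and side: "a * c > 0 \<and> - d / c \<le> u \<or> a * c < 0 \<and> v \<le> - d / c"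
  obtains r where "r \<noteq> 0" "val_ge 2 r \<sigma>" "u < (a / r^4 - d) / c" "(a / r^4 - d) / c < v"
proof -
  have p: "prime (2::int)" by simp
  have t: "(a / r^4 - d) / c = a / c / r^4 - d / c" for r using c by (simp add: field_simps)
  from side show ?thesis
  proof
    assume ac: "a * c > 0 \<and> - d / c \<le> u"
    then have "0 < a / c" by (simp add: zero_less_divide_iff zero_less_mult_iff)
    obtain r where "r \<noteq> 0" "val_ge 2 r \<sigma>" "u + d / c < a / c / r^4" "a / c / r^4 < v + d / c"
      by (rule val_ge_div_power_dense[OF p _ \<open>0 < a / c\<close>, where n = 4 and \<sigma> = \<sigma>
          and u = "u + d / c" and v = "v + d / c"])
        (use ac \<open>u < v\<close> in auto)
    then show ?thesis using that[of r] by (simp add: t)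
  next
    assume ac: "a * c < 0 \<and> v \<le> - d / c"
    then have "0 < - (a / c)" by (simp add: divide_less_0_iff mult_less_0_iff)
    obtain r where "r \<noteq> 0" "val_ge 2 r \<sigma>"
      "- v - d / c < - (a / c) / r^4" "- (a / c) / r^4 < - u - d / c"
      by (rule val_ge_div_power_dense[OF p _ \<open>0 < - (a / c)\<close>, where n = 4 and \<sigma> = \<sigma>
          and u = "- v - d / c" and v = "- u - d / c"])
        (use ac \<open>u < v\<close> in auto)
    then show ?thesis using that[of r] by (simp add: t)
  qed
qed

theorem corollary4p3:
  fixes a c d :: rat
  assumes "a \<noteq> 0" "c \<noteq> 0" "d \<noteq> 0"
  defines "f \<equiv> (\<lambda>t::rat. t^4 + c * t + d)"
  shows "\<exists>W :: rat set.
           (\<forall>t\<in>W. f t \<noteq> 0 \<and> positive_rank (f t) a 0) \<and>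
           (a * c > 0 \<longrightarrow> (\<forall>u v. - d / c \<le> u \<and> u < v \<longrightarrow> (\<exists>w\<in>W. u < w \<and> w < v))) \<and>
           (a * c < 0 \<longrightarrow> (\<forall>u v. u < v \<and> v \<le> - d / c \<longrightarrow> (\<exists>w\<in>W. u < w \<and> w < v)))"
proof -
  define \<sigma> where "\<sigma> = \<bar>rat_val 2 a\<bar> + \<bar>rat_val 2 c\<bar> + \<bar>rat_val 2 d\<bar> + 1"
  define W where "W = {(a / r^4 - d) / c | r. r \<noteq> 0 \<and> val_ge 2 r \<sigma>}"
  have "f t \<noteq> 0 \<and> positive_rank (f t) a 0" if "t \<in> W" for t
    using that positive_rank_quartic_fibre[OF assms(1,2)] by (auto simp: W_def f_def \<sigma>_def)
  moreover have "\<exists>w\<in>W. u < w \<and> w < v"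
    if "u < v" "a * c > 0 \<and> - d / c \<le> u \<or> a * c < 0 \<and> v \<le> - d / c" for u v
    using quartic_fibre_parameter_between[OF assms(2) that] unfolding W_def by blast
  ultimately show ?thesis by blast
qed

end
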